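(* Let $G=(V,E)$ be a directed graph with edge weights $\omega:E\to\mathbb{R}^{\geq 0}$, let $s,t\in V$ and $k\geq 1$. Let $G'$ be obtained from $G$ by replacing every edge $e$ by $k$ parallel copies $e_1,\dots,e_k$, each of weight $\omega(e)$. Consider solutions consisting of $k$ pairwise edge-disjoint $s\leadsto t$ paths $\mathcal{F}=\{F_1,\dots,F_k\}$ in $G'$ and one $t\leadsto s$ path $B$ in $G'$, with cost equal to the total weight of the set of edges of $G'$ used by $F_1,\dots,F_k,B$. Then there exists an optimum (minimum cost) solution $(\mathcal{F},B)$ that is reverse-compatible.
   Context: For an $s\leadsto t$ path $F$ and a $t\leadsto s$ path $B$, let $P_1,\dots,P_d$ be the maximal sub-paths shared by $F$ and $B$, indexed so that $P_j$ is the $j$-th such sub-path encountered while traversing $F$. The pair $(F,B)$ is path-reverse-compatible if for every $j\in[d]$, $P_j$ is the $(d-j+1)$-th of these sub-paths encountered while traversing $B$. A pair $(\mathcal{F},B)$ with $\mathcal{F}=\{F_1,\dots,F_r\}$ a set of $s\leadsto t$ paths is reverse-compatible if $(F_i,B)$ is path-reverse-compatible for every $i$. (This edge-copy setting models the 2-SCSS-$(k,1)$ problem, in which one seeks $k$ paths $s\leadsto t$ and one path $t\leadsto s$ minimizing $\sum_e\omega(e)\max\{\#\{i: e\in F_i\},\ \#\{B\ni e\}\}$.) *)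

theory Defs
  imports "Graph_Theory.Digraph" "Graph_Theory.Arc_Walk" "HOL-Library.Sublist"
begin

definition copy_graph :: "('a,'b) pre_digraph \<Rightarrow> nat \<Rightarrow> ('a, 'b \<times> nat) pre_digraph" where
  "copy_graph G k = \<lparr> verts = verts G, arcs = arcs G \<times> {0..<k},
      tail = (\<lambda>a. tail G (fst a)), head = (\<lambda>a. head G (fst a)) \<rparr>"

definition is_solution ::
  "('a,'b) pre_digraph \<Rightarrow> nat \<Rightarrow> 'a \<Rightarrow> 'a \<Rightarrow> (nat \<Rightarrow> ('b \<times> nat) list) \<Rightarrow> ('b \<times> nat) list \<Rightarrow> bool" where
  "is_solution G k s t Fs B \<longleftrightarrow>
     (\<forall>i<k. pre_digraph.apath (copy_graph G k) s (Fs i) t) \<and>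
     (\<forall>i<k. \<forall>j<k. i \<noteq> j \<longrightarrow> set (Fs i) \<inter> set (Fs j) = {}) \<and>
     pre_digraph.apath (copy_graph G k) t B s"

definition sol_cost ::
  "('b \<Rightarrow> real) \<Rightarrow> nat \<Rightarrow> (nat \<Rightarrow> ('b \<times> nat) list) \<Rightarrow> ('b \<times> nat) list \<Rightarrow> real" where
  "sol_cost \<omega> k Fs B = (\<Sum>a \<in> (\<Union>i<k. set (Fs i)) \<union> set B. \<omega> (fst a))"

definition shared_subpaths :: "'e list \<Rightarrow> 'e list \<Rightarrow> 'e list set" where
  "shared_subpaths F B = {P. P \<noteq> [] \<and> sublist P F \<and> sublist P B}"

definition max_shared_subpaths :: "'e list \<Rightarrow> 'e list \<Rightarrow> 'e list set" where
  "max_shared_subpaths F B =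
     {P \<in> shared_subpaths F B. \<forall>Q \<in> shared_subpaths F B. sublist P Q \<longrightarrow> Q = P}"

definition occurs_before :: "'e list \<Rightarrow> 'e list \<Rightarrow> 'e list \<Rightarrow> bool" where
  "occurs_before xs P Q \<longleftrightarrow> (\<exists>u v w. xs = u @ P @ v @ Q @ w)"

definition order_along :: "'e list \<Rightarrow> 'e list set \<Rightarrow> 'e list list" where
  "order_along xs S = (THE ds. distinct ds \<and> set ds = S \<and> sorted_wrt (occurs_before xs) ds)"

text \<open>(F,B) is path-reverse-compatible: the j-th maximal shared sub-path along F is the
  (d-j+1)-th along B, i.e. the order along F is the reverse of the order along B.\<close>
definition path_rev_compatible :: "'e list \<Rightarrow> 'e list \<Rightarrow> bool" where
  "path_rev_compatible F B \<longleftrightarrow>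
     (let S = max_shared_subpaths F B; d = card S in
      \<forall>j<d. order_along F S ! j = order_along B S ! (d - j - 1))"

definition rev_compatible :: "nat \<Rightarrow> (nat \<Rightarrow> 'e list) \<Rightarrow> 'e list \<Rightarrow> bool" where
  "rev_compatible k Fs B \<longleftrightarrow> (\<forall>i<k. path_rev_compatible (Fs i) B)"

end

theory Submission
  imports Defs
begin

text \<open>Among the optimum solutions, fix the forward paths and choose the backward path \<open>B\<close>
  with the fewest breaks, a break being a pair of consecutive arcs of \<open>B\<close> that are not
  consecutive on any forward path. Suppose some \<open>F\<^sub>i\<close> and \<open>B\<close> traverse two maximal
  shared sub-paths \<open>P\<close> and \<open>Q\<close> in the same order. Replacing the part of \<open>B\<close> between
  \<open>P\<close> and \<open>Q\<close> by the part of \<open>F\<^sub>i\<close> between them and shortcutting the resulting walk to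
  a path uses only arcs of the solution, so the cost does not grow. It removes the break that
  \<open>B\<close> must have right after the maximal sub-path \<open>P\<close>, and creates none: a removed closed
  sub-walk is never a sub-path of a forward path. This contradicts the choice of \<open>B\<close>.\<close>

section \<open>Sub-lists of distinct lists\<close>

lemma distinct_append_Cons_eqD:
  assumes "distinct (xs @ x # ys)" "xs @ x # ys = xs' @ x # ys'"
  shows "xs = xs' \<and> ys = ys'"
proof -
  have "x \<notin> set xs" "x \<notin> set ys" using assms(1) by auto
  then show ?thesis using assms(2) append_Cons_eq_iff[of x xs ys xs' ys'] by blast
qed

lemma distinct_split_around_unique:
  assumes "distinct X" "X = a @ Q @ b" "X = c @ Q @ d" "Q \<noteq> []"
  shows "a = c \<and> b = d"
proof -
  obtain q Q' where Q: "Q = q # Q'" using assms(4) by (cases Q) auto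
  have eq: "a @ q # (Q' @ b) = c @ q # (Q' @ d)" using assms(2,3) Q by simp
  have "distinct (a @ q # (Q' @ b))" using assms(1,2) Q by simp
  then show ?thesis using distinct_append_Cons_eqD[OF _ eq] by simp
qed

lemma sublist_join_at:
  assumes "distinct X" "sublist (xs @ [a]) X" "sublist (a # ys) X"
  shows "sublist (xs @ a # ys) X"
proof -
  obtain u v where 1: "X = u @ (xs @ [a]) @ v" using assms(2) unfolding sublist_def by blast
  obtain u' v' where 2: "X = u' @ (a # ys) @ v'" using assms(3) unfolding sublist_def by blast
  have eq: "(u @ xs) @ a # v = u' @ a # (ys @ v')" using 1 2 by simp
  have "distinct ((u @ xs) @ a # v)" using assms(1) 1 by simp
  then have "v = ys @ v'" using distinct_append_Cons_eqD[OF _ eq] by blast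
  then have "X = u @ (xs @ a # ys) @ v'" using 1 by simp
  then show ?thesis unfolding sublist_def by blast
qed

lemma sublist_Cons_prefix_comparable:
  assumes "distinct X" "sublist (a # p) X" "sublist (a # q) X"
  shows "prefix p q \<or> prefix q p"
proof -
  obtain u v where 1: "X = u @ (a # p) @ v" using assms(2) unfolding sublist_def by blast
  obtain u' v' where 2: "X = u' @ (a # q) @ v'" using assms(3) unfolding sublist_def by blast
  have eq: "u @ a # (p @ v) = u' @ a # (q @ v')" using 1 2 by simp
  have "distinct (u @ a # (p @ v))" using assms(1) 1 by simp
  then have "p @ v = q @ v'" using distinct_append_Cons_eqD[OF _ eq] by blast
  then show ?thesis unfolding append_eq_append_conv2 prefix_def by blast
qed

lemma sublist_snoc_suffix_comparable:
  assumes "distinct X" "sublist (p @ [a]) X" "sublist (q @ [a]) X"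
  shows "suffix p q \<or> suffix q p"
proof -
  obtain u v where 1: "X = u @ (p @ [a]) @ v" using assms(2) unfolding sublist_def by blast
  obtain u' v' where 2: "X = u' @ (q @ [a]) @ v'" using assms(3) unfolding sublist_def by blast
  have eq: "(u @ p) @ a # v = (u' @ q) @ a # v'" using 1 2 by simp
  have "distinct ((u @ p) @ a # v)" using assms(1) 1 by simp
  then have "u @ p = u' @ q" using distinct_append_Cons_eqD[OF _ eq] by blast
  then show ?thesis unfolding append_eq_append_conv2 suffix_def by blast
qed

lemma sublist_split_at:
  assumes "sublist (p1 @ a # p2) X"
  shows "sublist (p1 @ [a]) X" "sublist (a # p2) X"
proof -
  have "prefix (p1 @ [a]) (p1 @ a # p2)" "suffix (a # p2) (p1 @ a # p2)"
    by (simp_all add: suffix_appendI)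
  then show "sublist (p1 @ [a]) X" "sublist (a # p2) X"
    using assms prefix_imp_sublist suffix_imp_sublist sublist_order.order_trans by blast+
qed

lemma sublist_append_Cons_mono:
  assumes "suffix p1 s1" "prefix p2 s2"
  shows "sublist (p1 @ a # p2) (s1 @ a # s2)"
proof -
  obtain zs ys where "s1 = zs @ p1" "s2 = p2 @ ys"
    using assms unfolding suffix_def prefix_def by blast
  then show ?thesis using sublist_appendI[of "p1 @ a # p2" zs ys] by simp
qed

text \<open>The union is given by the two sub-lists alone, not by \<open>X\<close>: the same list is
  then a common sub-list of two paths containing both.\<close>

lemma sublist_union_at:
  assumes "distinct X" "sublist (p1 @ a # p2) X" "sublist (q1 @ a # q2) X"
  defines "s1 \<equiv> if suffix p1 q1 then q1 else p1" and "s2 \<equiv> if prefix p2 q2 then q2 else p2"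
  shows "sublist (s1 @ a # s2) X" "sublist (p1 @ a # p2) (s1 @ a # s2)"
    "sublist (q1 @ a # q2) (s1 @ a # s2)"
proof -
  have "suffix p1 q1 \<or> suffix q1 p1" "prefix p2 q2 \<or> prefix q2 p2"
    using sublist_snoc_suffix_comparable[OF assms(1) sublist_split_at(1)[OF assms(2)]
        sublist_split_at(1)[OF assms(3)]]
      sublist_Cons_prefix_comparable[OF assms(1) sublist_split_at(2)[OF assms(2)]
        sublist_split_at(2)[OF assms(3)]] .
  then have "suffix p1 s1" "suffix q1 s1" "prefix p2 s2" "prefix q2 s2"
    unfolding s1_def s2_def by auto
  then show "sublist (p1 @ a # p2) (s1 @ a # s2)" "sublist (q1 @ a # q2) (s1 @ a # s2)"
    by (simp_all add: sublist_append_Cons_mono)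
  have "sublist (s1 @ [a]) X" "sublist (a # s2) X"
    unfolding s1_def s2_def using sublist_split_at[OF assms(2)] sublist_split_at[OF assms(3)]
    by simp_all
  then show "sublist (s1 @ a # s2) X" by (rule sublist_join_at[OF assms(1)])
qed

lemma sublist_append_disjoint_left:
  assumes "sublist xs (ys @ zs)" "set xs \<inter> set ys = {}"
  shows "sublist xs zs"
proof -
  consider "sublist xs ys" | "sublist xs zs"
    | xs1 xs2 where "xs = xs1 @ xs2" "suffix xs1 ys" "prefix xs2 zs"
    using assms(1)[unfolded sublist_append] by blast
  then show ?thesis
  proof cases
    case 1
    then have "set xs \<subseteq> set xs \<inter> set ys" using set_mono_sublist by auto
    then have "xs = []" using assms(2) by simp
    then show ?thesis by simp
  next
    case 3
    have "set xs1 \<subseteq> set xs \<inter> set ys" using 3(1) set_mono_suffix[OF 3(2)] by auto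
    then have "xs1 = []" using assms(2) by simp
    then show ?thesis using 3 prefix_imp_sublist by simp
  qed
qed

lemma sublist_disjoint_from_middle:
  assumes "P \<noteq> []" "sublist Q (u @ P @ v)" "set P \<inter> set Q = {}"
  shows "sublist Q u \<or> sublist Q v"
proof -
  consider "sublist Q u" | "sublist Q (P @ v)"
    | xs1 xs2 where "Q = xs1 @ xs2" "suffix xs1 u" "prefix xs2 (P @ v)"
    using assms(2)[unfolded sublist_append[of Q u "P @ v"]] by blast
  then show ?thesis
  proof cases
    case 2
    then show ?thesis using sublist_append_disjoint_left assms(3) by (metis inf_commute)
  next
    case 3
    show ?thesis
    proof (cases "xs2 = []")
      case True
      then show ?thesis using 3 by (simp add: suffix_imp_sublist)
    next
      case False
      then have "hd xs2 = hd P" using 3(3) assms(1) by (metis hd_append2 prefix_def)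
      then have "hd P \<in> set P \<inter> set Q" using False assms(1) 3(1) by (metis IntI UnCI
        hd_in_set set_append)
      then show ?thesis using assms(3) by blast
    qed
  qed simp
qed

section \<open>The order of disjoint sub-paths along a path\<close>

lemma occurs_before_irrefl:
  assumes "distinct X" "P \<noteq> []"
  shows "\<not> occurs_before X P P"
proof
  assume "occurs_before X P P"
  then obtain u v w where "X = u @ P @ v @ P @ w" unfolding occurs_before_def by blast
  then show False using assms by (cases P) auto
qed

lemma occurs_before_trans:
  assumes "distinct X" "Q \<noteq> []" "occurs_before X P Q" "occurs_before X Q R"
  shows "occurs_before X P R"
proof -
  obtain u v w where 1: "X = u @ P @ v @ Q @ w"
    using assms(3) unfolding occurs_before_def by blast
  obtain u' v' w' where 2: "X = u' @ Q @ v' @ R @ w'"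
    using assms(4) unfolding occurs_before_def by blast
  have "w = v' @ R @ w'"
    using distinct_split_around_unique[OF assms(1) _ _ assms(2), of "u @ P @ v" w u' "v' @ R @ w'"]
      1 2 by simp
  then have "X = u @ P @ (v @ Q @ v') @ R @ w'" using 1 by simp
  then show ?thesis unfolding occurs_before_def by blast
qed

lemma occurs_before_total:
  assumes "P \<noteq> []" "sublist P X" "sublist Q X" "set P \<inter> set Q = {}"
  shows "occurs_before X P Q \<or> occurs_before X Q P"
proof -
  obtain u v where X: "X = u @ P @ v" using assms(2) unfolding sublist_def by blast
  then have "sublist Q u \<or> sublist Q v"
    using sublist_disjoint_from_middle assms by blast
  then show ?thesis unfolding occurs_before_def sublist_def X by fastforce
qed

lemma sorted_wrt_unique:
  assumes irrefl: "\<And>x. x \<in> A \<Longrightarrow> \<not> r x x"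
    and trans: "\<And>x y z. x \<in> A \<Longrightarrow> y \<in> A \<Longrightarrow> z \<in> A \<Longrightarrow> r x y \<Longrightarrow> r y z \<Longrightarrow> r x z"
  shows "set xs \<subseteq> A \<Longrightarrow> distinct xs \<Longrightarrow> distinct ys \<Longrightarrow> set ys = set xs \<Longrightarrow>
    sorted_wrt r xs \<Longrightarrow> sorted_wrt r ys \<Longrightarrow> xs = ys"
proof (induction xs arbitrary: ys)
  case Nil
  then show ?case by simp
next
  case (Cons x xs)
  have "ys \<noteq> []" using Cons.prems(4) by auto
  then obtain y ys' where ys: "ys = y # ys'" by (meson neq_Nil_conv)
  have "x = y"
  proof (rule ccontr)
    assume "x \<noteq> y"
    have "y \<in> set (x # xs)" "x \<in> set ys" using Cons.prems(4) ys by auto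
    then have "y \<in> set xs" "x \<in> set ys'" using \<open>x \<noteq> y\<close> ys by auto
    then have "r x y" "r y x" using Cons.prems(5,6) ys by auto
    moreover have "x \<in> A" "y \<in> A" using Cons.prems(1) \<open>y \<in> set xs\<close> by auto
    ultimately show False using irrefl[of x] trans[of x y x] by blast
  qed
  have "set ys' = set xs"
  proof -
    have "x \<notin> set xs" "y \<notin> set ys'" using Cons.prems(2,3) ys by auto
    then show ?thesis using Cons.prems(4) \<open>x = y\<close> ys by auto
  qed
  then have "xs = ys'"
  proof (rule Cons.IH[rotated 3])
    show "set xs \<subseteq> A" "distinct xs" "sorted_wrt r xs" using Cons.prems(1,2,5) by auto
    show "distinct ys'" "sorted_wrt r ys'" using Cons.prems(3,6) ys by auto
  qed
  then show ?case using ys \<open>x = y\<close> by simp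
qed

lemma sorted_wrt_exists:
  assumes "finite A"
    and irrefl: "\<And>x. x \<in> A \<Longrightarrow> \<not> r x x"
    and trans: "\<And>x y z. x \<in> A \<Longrightarrow> y \<in> A \<Longrightarrow> z \<in> A \<Longrightarrow> r x y \<Longrightarrow> r y z \<Longrightarrow> r x z"
    and total: "\<And>x y. x \<in> A \<Longrightarrow> y \<in> A \<Longrightarrow> x \<noteq> y \<Longrightarrow> r x y \<or> r y x"
  shows "\<exists>xs. distinct xs \<and> set xs = A \<and> sorted_wrt r xs"
proof -
  have "finite B \<Longrightarrow> B \<subseteq> A \<Longrightarrow> \<exists>xs. distinct xs \<and> set xs = B \<and> sorted_wrt r xs" for B
  proof (induction B rule: finite_induct)
    case (insert x B)
    then obtain xs where xs: "distinct xs" "set xs = B" "sorted_wrt r xs" by auto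
    have A: "x \<in> A" "B \<subseteq> A" using insert.prems by auto
    define lo where "lo = filter (\<lambda>y. r y x) xs"
    define hi where "hi = filter (\<lambda>y. r x y) xs"
    have "y \<in> set lo \<union> set hi" if "y \<in> B" for y
    proof -
      have "r y x \<or> r x y" using total[of y x] A that \<open>x \<notin> B\<close> by blast
      then show ?thesis using xs(2) that unfolding lo_def hi_def by auto
    qed
    then have "set lo \<union> set hi = B" using xs(2) unfolding lo_def hi_def by auto
    moreover have "y \<notin> set hi" if "y \<in> set lo" for y
    proof
      assume "y \<in> set hi"
      then have "r y x" "r x y" "y \<in> A" using that xs(2) A unfolding lo_def hi_def by auto
      then show False using irrefl[of y] trans[of y x y] A by blast
    qed
    then have "set lo \<inter> set hi = {}" by blast
    moreover have "r y z" if "y \<in> set lo" "z \<in> set hi" for y z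
      using that xs(2) A trans[of y x z] unfolding lo_def hi_def by auto
    moreover have "distinct lo" "distinct hi" "sorted_wrt r lo" "sorted_wrt r hi"
      "\<forall>y\<in>set lo. r y x" "\<forall>y\<in>set hi. r x y"
      using xs unfolding lo_def hi_def by (auto simp: sorted_wrt_filter)
    ultimately have "distinct (lo @ x # hi)" "set (lo @ x # hi) = insert x B"
      "sorted_wrt r (lo @ x # hi)"
      using \<open>x \<notin> B\<close> by (auto simp: sorted_wrt_append)
    then show ?case by blast
  qed simp
  then show ?thesis using assms(1) by blast
qed

definition disjoint_sublists :: "'e list \<Rightarrow> 'e list set \<Rightarrow> bool" where
  "disjoint_sublists X S \<longleftrightarrow> finite S \<and> (\<forall>P\<in>S. P \<noteq> [] \<and> sublist P X)
     \<and> (\<forall>P\<in>S. \<forall>Q\<in>S. P \<noteq> Q \<longrightarrow> set P \<inter> set Q = {})"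

lemma disjoint_sublists_occurs_before:
  assumes "distinct X" "disjoint_sublists X S"
  shows "P \<in> S \<Longrightarrow> \<not> occurs_before X P P"
    and "Q \<in> S \<Longrightarrow> occurs_before X P Q \<Longrightarrow> occurs_before X Q R \<Longrightarrow> occurs_before X P R"
    and "P \<in> S \<Longrightarrow> Q \<in> S \<Longrightarrow> P \<noteq> Q \<Longrightarrow> occurs_before X P Q \<or> occurs_before X Q P"
  using assms occurs_before_irrefl occurs_before_trans occurs_before_total
  unfolding disjoint_sublists_def by metis+

lemma order_along_eqI:
  assumes "distinct X" "disjoint_sublists X S"
    and "distinct L" "set L = S" "sorted_wrt (occurs_before X) L"
  shows "order_along X S = L"
  unfolding order_along_def
proof (rule the_equality)
  fix ds assume ds: "distinct ds \<and> set ds = S \<and> sorted_wrt (occurs_before X) ds"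
  show "ds = L"
  proof (rule sorted_wrt_unique[where r = "occurs_before X" and A = S])
    show "\<And>P. P \<in> S \<Longrightarrow> \<not> occurs_before X P P"
      "\<And>P Q R. P \<in> S \<Longrightarrow> Q \<in> S \<Longrightarrow> R \<in> S \<Longrightarrow> occurs_before X P Q \<Longrightarrow>
        occurs_before X Q R \<Longrightarrow> occurs_before X P R"
      using disjoint_sublists_occurs_before[OF assms(1,2)] by blast+
  qed (use ds assms(3-5) in auto)
qed (use assms in blast)

lemma exists_sorted_occurs_before:
  assumes "distinct X" "disjoint_sublists X S"
  shows "\<exists>L. distinct L \<and> set L = S \<and> sorted_wrt (occurs_before X) L"
proof (rule sorted_wrt_exists)
  show "finite S" using assms(2) unfolding disjoint_sublists_def by blast
qed (use disjoint_sublists_occurs_before[OF assms] in blast)+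

section \<open>Maximal shared sub-paths\<close>

lemma max_shared_subpathsD:
  assumes "P \<in> max_shared_subpaths F B"
  shows "P \<noteq> []" "sublist P F" "sublist P B"
  using assms unfolding max_shared_subpaths_def shared_subpaths_def by auto

lemma max_shared_subpaths_maximal:
  assumes "P \<in> max_shared_subpaths F B" "U \<noteq> []" "sublist U F" "sublist U B" "sublist P U"
  shows "U = P"
  using assms unfolding max_shared_subpaths_def shared_subpaths_def by auto

lemma finite_max_shared_subpaths: "finite (max_shared_subpaths F B)"
proof (rule finite_subset)
  show "max_shared_subpaths F B \<subseteq> set (sublists F)"
    using max_shared_subpathsD(2) by auto
qed simp

lemma max_shared_subpaths_disjoint:
  assumes "distinct F" "distinct B"
    and P: "P \<in> max_shared_subpaths F B" and Q: "Q \<in> max_shared_subpaths F B"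
    and "P \<noteq> Q"
  shows "set P \<inter> set Q = {}"
proof (rule ccontr)
  assume "set P \<inter> set Q \<noteq> {}"
  then obtain a where "a \<in> set P" "a \<in> set Q" by blast
  then obtain p1 p2 q1 q2 where Pa: "P = p1 @ a # p2" and Qa: "Q = q1 @ a # q2"
    by (meson split_list)
  define U where "U = (if suffix p1 q1 then q1 else p1) @ a # (if prefix p2 q2 then q2 else p2)"
  have "sublist U F" "sublist P U" "sublist Q U"
    using sublist_union_at[OF \<open>distinct F\<close>] max_shared_subpathsD(2)[OF P]
      max_shared_subpathsD(2)[OF Q]
    unfolding Pa Qa U_def by blast+
  moreover have "sublist U B"
    using sublist_union_at[OF \<open>distinct B\<close>] max_shared_subpathsD(3)[OF P]
      max_shared_subpathsD(3)[OF Q]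
    unfolding Pa Qa U_def by blast
  moreover have "U \<noteq> []" unfolding U_def by simp
  ultimately have "U = P" "U = Q"
    using max_shared_subpaths_maximal[OF P] max_shared_subpaths_maximal[OF Q] by blast+
  then show False using \<open>P \<noteq> Q\<close> by simp
qed

lemma disjoint_sublists_max_shared_subpaths:
  assumes "distinct F" "distinct B" "X = F \<or> X = B"
  shows "disjoint_sublists X (max_shared_subpaths F B)"
proof -
  have "P \<noteq> [] \<and> sublist P X" if "P \<in> max_shared_subpaths F B" for P
    using max_shared_subpathsD[OF that] assms(3) by blast
  then show ?thesis
    using finite_max_shared_subpaths max_shared_subpaths_disjoint[OF assms(1,2)]
    unfolding disjoint_sublists_def by blast
qed

lemma path_rev_compatibleI:
  assumes "distinct F" "distinct B"
    and "\<And>P Q. P \<in> max_shared_subpaths F B \<Longrightarrow> Q \<in> max_shared_subpaths F B \<Longrightarrow>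
      occurs_before F P Q \<Longrightarrow> occurs_before B Q P"
  shows "path_rev_compatible F B"
proof -
  let ?S = "max_shared_subpaths F B"
  have F: "disjoint_sublists F ?S" and B: "disjoint_sublists B ?S"
    using disjoint_sublists_max_shared_subpaths assms(1,2) by blast+
  obtain L where L: "distinct L" "set L = ?S" "sorted_wrt (occurs_before F) L"
    using exists_sorted_occurs_before[OF assms(1) F] by blast
  have "order_along F ?S = L" using order_along_eqI[OF assms(1) F L] .
  moreover have "sorted_wrt (\<lambda>P Q. occurs_before B Q P) L"
    by (rule sorted_wrt_mono_rel[OF _ L(3)]) (use assms(3) L(2) in blast)
  then have "sorted_wrt (occurs_before B) (rev L)" by (simp add: sorted_wrt_rev)
  then have "order_along B ?S = rev L"
    using order_along_eqI[OF assms(2) B] L(1,2) by simp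
  moreover have "card ?S = length L" using L(1,2) distinct_card by fastforce
  ultimately show ?thesis by (simp add: path_rev_compatible_def rev_nth)
qed

section \<open>Breaks of a path with respect to a family of paths\<close>

definition consecutive_in :: "nat \<Rightarrow> (nat \<Rightarrow> 'e list) \<Rightarrow> 'e \<Rightarrow> 'e \<Rightarrow> bool" where
  "consecutive_in k Fs x y \<longleftrightarrow> (\<exists>j<k. sublist [x, y] (Fs j))"

fun breaks :: "nat \<Rightarrow> (nat \<Rightarrow> 'e list) \<Rightarrow> 'e list \<Rightarrow> nat" where
  "breaks k Fs (x # y # zs) = (if consecutive_in k Fs x y then 0 else 1) + breaks k Fs (y # zs)"
| "breaks k Fs _ = 0"

lemma breaks_append:
  "xs \<noteq> [] \<Longrightarrow> ys \<noteq> [] \<Longrightarrow> breaks k Fs (xs @ ys) =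
     breaks k Fs xs + breaks k Fs ys + (if consecutive_in k Fs (last xs) (hd ys) then 0 else 1)"
  by (induction xs rule: induct_list012) (auto simp: neq_Nil_conv)

lemma breaks_eq_0_if_sublist:
  assumes "j < k"
  shows "sublist L (Fs j) \<Longrightarrow> breaks k Fs L = 0"
proof (induction L rule: induct_list012)
  case (3 x y zs)
  have "sublist [x, y] (Fs j)" "sublist (y # zs) (Fs j)"
    using sublist_split_at[of "[x]" y zs "Fs j"] "3.prems" by simp_all
  then have "consecutive_in k Fs x y" "breaks k Fs (y # zs) = 0"
    using "3.IH"(2) assms unfolding consecutive_in_def by blast+
  then show ?case by simp
qed auto

lemma breaks_le_append:
  "breaks k Fs xs \<le> breaks k Fs (xs @ ys)" "breaks k Fs ys \<le> breaks k Fs (xs @ ys)"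
  using breaks_append[of xs ys k Fs] by (cases "xs = []"; cases "ys = []"; simp)+

lemma breaks_replace_middle:
  assumes "M \<noteq> []" "M' \<noteq> []" "hd M' = hd M" "last M' = last M"
    and "breaks k Fs M' < breaks k Fs M"
  shows "breaks k Fs (A @ M' @ C) < breaks k Fs (A @ M @ C)"
proof -
  have "breaks k Fs (M' @ C) < breaks k Fs (M @ C)"
    using assms breaks_append[OF assms(1), of C k Fs] breaks_append[OF assms(2), of C k Fs]
    by (cases "C = []") simp_all
  then show ?thesis
    using assms breaks_append[of A "M' @ C" k Fs] breaks_append[of A "M @ C" k Fs]
    by (cases "A = []") simp_all
qed

locale disjoint_lists =
  fixes k :: nat and Fs :: "nat \<Rightarrow> 'e list"
  assumes disjoint: "\<And>i j. i < k \<Longrightarrow> j < k \<Longrightarrow> i \<noteq> j \<Longrightarrow> set (Fs i) \<inter> set (Fs j) = {}"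
    and distinct: "\<And>j. j < k \<Longrightarrow> distinct (Fs j)"
begin

lemma index_unique:
  assumes "i < k" "j < k" "x \<in> set (Fs i)" "x \<in> set (Fs j)"
  shows "i = j"
  using disjoint[OF assms(1,2)] assms(3,4) by blast

lemma consecutive_in_at:
  assumes "consecutive_in k Fs x y" "j < k" "x \<in> set (Fs j)"
  shows "sublist [x, y] (Fs j)"
proof -
  obtain j' where j': "j' < k" "sublist [x, y] (Fs j')"
    using assms(1) unfolding consecutive_in_def by blast
  then have "x \<in> set (Fs j')" using set_mono_sublist by fastforce
  then have "j' = j" using index_unique j'(1) assms(2,3) by blast
  then show ?thesis using j'(2) by simp
qed

lemma sublist_if_breaks_eq_0:
  assumes "j < k"
  shows "breaks k Fs L = 0 \<Longrightarrow> L \<noteq> [] \<Longrightarrow> hd L \<in> set (Fs j) \<Longrightarrow> sublist L (Fs j)"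
proof (induction L rule: induct_list012)
  case (2 x)
  then have "x \<in> set (Fs j)" by simp
  then obtain u v where "Fs j = u @ x # v" by (meson split_list)
  then show ?case unfolding sublist_def by (metis append_Cons append_Nil)
next
  case (3 x y zs)
  have "consecutive_in k Fs x y" "breaks k Fs (y # zs) = 0"
    using "3.prems"(1) by (simp_all split: if_splits)
  moreover have "x \<in> set (Fs j)" using "3.prems"(3) by simp
  ultimately have xy: "sublist ([x] @ [y]) (Fs j)" using consecutive_in_at assms by simp
  then have "y \<in> set (Fs j)" using set_mono_sublist by fastforce
  then have "sublist (y # zs) (Fs j)"
    using "3.IH"(2) \<open>breaks k Fs (y # zs) = 0\<close> by simp
  then show ?case using sublist_join_at[OF distinct[OF assms] xy] by simp
qed simp

lemma breaks_remove_segment: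
  assumes "c \<noteq> []" and not_sublist: "\<And>j. j < k \<Longrightarrow> \<not> sublist c (Fs j)"
  shows "breaks k Fs (a @ b) \<le> breaks k Fs (a @ c @ b)"
proof (cases "a = [] \<or> b = []")
  case True
  then show ?thesis using breaks_le_append[of k Fs] by auto
next
  case False
  txt \<open>Joining \<open>a\<close> to \<open>b\<close> costs at most one break, and \<open>a @ c\<close> has a break inside
    or in front of \<open>c\<close>, because \<open>c\<close> does not continue along a single \<open>Fs j\<close>.\<close>
  have "breaks k Fs c \<noteq> 0 \<or> \<not> consecutive_in k Fs (last a) (hd c)"
  proof (rule ccontr)
    assume "\<not> ?thesis"
    then obtain j where j: "j < k" "sublist [last a, hd c] (Fs j)" and "breaks k Fs c = 0"
      unfolding consecutive_in_def by blast
    then have "hd c \<in> set (Fs j)" using set_mono_sublist by fastforce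
    then have "sublist c (Fs j)"
      using sublist_if_breaks_eq_0[OF j(1) \<open>breaks k Fs c = 0\<close> assms(1)] by blast
    then show False using not_sublist j(1) by blast
  qed
  moreover have "breaks k Fs (a @ c @ b) = breaks k Fs a + breaks k Fs c + breaks k Fs b
      + (if consecutive_in k Fs (last a) (hd c) then 0 else 1)
      + (if consecutive_in k Fs (last c) (hd b) then 0 else 1)"
    using False assms(1) breaks_append[of a "c @ b" k Fs] breaks_append[of c b k Fs] by simp
  moreover have "breaks k Fs (a @ b) \<le> breaks k Fs a + breaks k Fs b + 1"
    using False breaks_append[of a b k Fs] by simp
  ultimately show ?thesis by (simp split: if_splits)
qed

text \<open>A maximal shared sub-path cannot be continued along \<open>B\<close> by a step of a forward path,
  since it would continue along \<open>F\<^sub>i\<close> as well.\<close>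

lemma not_consecutive_after_max_shared:
  assumes "i < k" "P \<in> max_shared_subpaths (Fs i) B" "sublist (P @ [b]) B"
  shows "\<not> consecutive_in k Fs (last P) b"
proof
  assume "consecutive_in k Fs (last P) b"
  have "P \<noteq> []" "sublist P (Fs i)" using max_shared_subpathsD[OF assms(2)] by auto
  then have P: "P = butlast P @ [last P]" "last P \<in> set (Fs i)"
    using set_mono_sublist by fastforce+
  then have "sublist (butlast P @ [last P]) (Fs i)" "sublist (last P # [b]) (Fs i)"
    using \<open>sublist P (Fs i)\<close> consecutive_in_at[OF \<open>consecutive_in k Fs (last P) b\<close> assms(1)]
    by simp_all
  then have "sublist (P @ [b]) (Fs i)"
    using sublist_join_at[OF distinct[OF assms(1)]] P(1) by (metis append_Cons append_assoc
      self_append_conv2)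
  then show False
    using max_shared_subpaths_maximal[OF assms(2) _ _ assms(3)] by auto
qed

end

section \<open>Rerouting the backward path\<close>

context wf_digraph
begin

lemma apath_distinct_arcs: "apath u p v \<Longrightarrow> distinct p"
  unfolding apath_def using distinct_verts_imp_distinct by blast

lemma apath_no_closed_subwalk:
  assumes "apath x F y" "sublist c F" "c \<noteq> []"
  shows "\<not> awalk w c w"
proof
  assume "awalk w c w"
  obtain a b where "F = a @ c @ b" using assms(2) unfolding sublist_def by blast
  then have "apath (awlast x a) c (awlast (awlast x a) c)"
    using assms(1) apath_append_iff by simp
  then show False
    using \<open>awalk w c w\<close> assms(3) awalk_ends apath_nonempty_ends unfolding apath_def by metis
qed

text \<open>Shortcutting a walk to a path never increases the number of breaks: the deleted closed
  sub-walks are not sub-paths of the paths \<open>Fs j\<close>.\<close>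

lemma awalk_shortcut_breaks:
  assumes "disjoint_lists k Fs" and "\<And>j. j < k \<Longrightarrow> \<exists>x y. apath x (Fs j) y"
  shows "awalk u p v \<Longrightarrow> \<exists>q. apath u q v \<and> set q \<subseteq> set p \<and> breaks k Fs q \<le> breaks k Fs p"
proof (induction "length p" arbitrary: p rule: less_induct)
  case less
  show ?case
  proof (cases "distinct (awalk_verts u p)")
    case True
    then show ?thesis using less.prems unfolding apath_def by blast
  next
    case False
    then obtain q r s w where d: "p = q @ r @ s" "r \<noteq> []" "awalk u q w" "awalk w r w" "awalk w s v"
      using awalk_not_distinct_decomp[OF less.prems] by blast
    then obtain q' where q': "apath u q' v" "set q' \<subseteq> set (q @ s)"
        "breaks k Fs q' \<le> breaks k Fs (q @ s)"
      using less.hyps[of "q @ s"] awalk_appendI by fastforce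
    have "\<not> sublist r (Fs j)" if "j < k" for j
      using assms(2)[OF that] apath_no_closed_subwalk d(2,4) by blast
    then have "breaks k Fs (q @ s) \<le> breaks k Fs p"
      using disjoint_lists.breaks_remove_segment[OF assms(1) d(2)] d(1) by blast
    then show ?thesis using q' d(1) by auto
  qed
qed

lemma awalk_reroute:
  assumes "awalk u (A @ P @ M @ Q @ C) v" "awalk u' (A' @ P @ M' @ Q @ C') v'"
    and "P \<noteq> []" "Q \<noteq> []"
  shows "awalk u (A @ P @ M' @ Q @ C) v"
proof -
  have end_P: "awlast x (ys @ P) = head G (last P)" for x ys
    using \<open>P \<noteq> []\<close> by (simp add: awalk_verts_conv)
  have start_Q: "awalk x (Q @ ys) y \<Longrightarrow> x = tail G (hd Q)" for x ys y
    using \<open>Q \<noteq> []\<close> by (cases Q) (auto simp: awalk_Cons_iff)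
  have "awalk (head G (last P)) M' (tail G (hd Q))"
    using assms(2) start_Q[of "awlast (head G (last P)) M'"] end_P[of u' A']
    by (metis append_assoc awalk_append_iff)
  moreover have "awalk u (A @ P) (head G (last P))" "awalk (tail G (hd Q)) (Q @ C) v"
    using assms(1) start_Q[of "awlast (head G (last P)) M"] end_P[of u A]
    by (metis append_assoc awalk_append_iff)+
  ultimately show ?thesis by (metis append_assoc awalk_appendI)
qed

lemma exchange_reduces_breaks:
  assumes fam: "disjoint_lists k Fs" and apF: "\<And>j. j < k \<Longrightarrow> apath s (Fs j) t"
    and apB: "apath t B s" and i: "i < k" and P: "P \<in> max_shared_subpaths (Fs i) B"
    and F: "Fs i = F1 @ P @ F2 @ Q @ F3" and B: "B = B1 @ P @ B2 @ Q @ B3" and "Q \<noteq> []"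
  shows "\<exists>B'. apath t B' s \<and> set B' \<subseteq> set B \<union> set (Fs i) \<and> breaks k Fs B' < breaks k Fs B"
proof -
  have "P \<noteq> []" using max_shared_subpathsD(1)[OF P] .
  have "awalk t (B1 @ P @ B2 @ Q @ B3) s" "awalk s (F1 @ P @ F2 @ Q @ F3) t"
    using apB apF[OF i] unfolding apath_def F B by blast+
  then have "awalk t (B1 @ P @ F2 @ Q @ B3) s"
    using awalk_reroute \<open>P \<noteq> []\<close> \<open>Q \<noteq> []\<close> by blast
  moreover have "\<exists>x y. apath x (Fs j) y" if "j < k" for j using apF[OF that] by blast
  ultimately obtain B' where B': "apath t B' s" "set B' \<subseteq> set (B1 @ P @ F2 @ Q @ B3)"
      "breaks k Fs B' \<le> breaks k Fs (B1 @ P @ F2 @ Q @ B3)"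
    using awalk_shortcut_breaks[OF fam] by meson
  have "sublist (P @ F2 @ Q) (Fs i)" using sublist_appendI[of "P @ F2 @ Q" F1 F3] F by simp
  then have "breaks k Fs (P @ F2 @ Q) = 0" by (rule breaks_eq_0_if_sublist[OF i])
  moreover obtain h r where hr: "B2 @ Q = h # r" using \<open>Q \<noteq> []\<close> by (cases "B2 @ Q") auto
  then have "B = B1 @ (P @ [h]) @ (r @ B3)" using B by (metis append_Cons append_assoc
      append_self_conv2)
  then have "sublist (P @ [h]) B" using sublist_appendI by metis
  then have "\<not> consecutive_in k Fs (last P) h"
    by (rule disjoint_lists.not_consecutive_after_max_shared[OF fam i P])
  then have "0 < breaks k Fs (P @ B2 @ Q)"
    using breaks_append[OF \<open>P \<noteq> []\<close>, of "B2 @ Q"] hr by simp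
  ultimately have less: "breaks k Fs (P @ F2 @ Q) < breaks k Fs (P @ B2 @ Q)" by simp
  have "hd (P @ F2 @ Q) = hd (P @ B2 @ Q)" "last (P @ F2 @ Q) = last (P @ B2 @ Q)"
    using \<open>P \<noteq> []\<close> \<open>Q \<noteq> []\<close> by simp_all
  then have "breaks k Fs (B1 @ (P @ F2 @ Q) @ B3) < breaks k Fs (B1 @ (P @ B2 @ Q) @ B3)"
    using breaks_replace_middle[OF _ _ _ _ less] \<open>P \<noteq> []\<close> by simp
  then have "breaks k Fs B' < breaks k Fs B" using B'(3) B by simp
  moreover have "set B' \<subseteq> set B \<union> set (Fs i)" using B'(2) F B by auto
  ultimately show ?thesis using B'(1) by blast
qed

lemma exists_fewer_breaks_if_not_rev_compatible:
  assumes fam: "disjoint_lists k Fs" and apF: "\<And>j. j < k \<Longrightarrow> apath s (Fs j) t"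
    and apB: "apath t B s" and i: "i < k" and "\<not> path_rev_compatible (Fs i) B"
  shows "\<exists>B'. apath t B' s \<and> set B' \<subseteq> set B \<union> set (Fs i) \<and> breaks k Fs B' < breaks k Fs B"
proof -
  let ?S = "max_shared_subpaths (Fs i) B"
  have dF: "distinct (Fs i)" and dB: "distinct B"
    using apath_distinct_arcs apF[OF i] apB by blast+
  have "\<exists>P\<in>?S. \<exists>Q\<in>?S. occurs_before (Fs i) P Q \<and> \<not> occurs_before B Q P"
  proof (rule ccontr)
    assume "\<not> ?thesis"
    then have "path_rev_compatible (Fs i) B" by (intro path_rev_compatibleI[OF dF dB]) blast
    then show False using assms(5) by blast
  qed
  then obtain P Q where P: "P \<in> ?S" and Q: "Q \<in> ?S"
    and PQ: "occurs_before (Fs i) P Q" and "\<not> occurs_before B Q P"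
    by blast
  have "P \<noteq> Q" using occurs_before_irrefl[OF dF max_shared_subpathsD(1)[OF P]] PQ by blast
  then have "occurs_before B P Q \<or> occurs_before B Q P"
    using occurs_before_total[OF max_shared_subpathsD(1)[OF P] max_shared_subpathsD(3)[OF P]
        max_shared_subpathsD(3)[OF Q] max_shared_subpaths_disjoint[OF dF dB P Q]] by blast
  then obtain B1 B2 B3 where "B = B1 @ P @ B2 @ Q @ B3"
    using \<open>\<not> occurs_before B Q P\<close> unfolding occurs_before_def by blast
  moreover obtain F1 F2 F3 where "Fs i = F1 @ P @ F2 @ Q @ F3"
    using PQ unfolding occurs_before_def by blast
  ultimately show ?thesis
    using exchange_reduces_breaks[OF fam apF apB i P] max_shared_subpathsD(1)[OF Q] by blast
qed

end

section \<open>Solutions in the graph with parallel copies\<close>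

lemma wf_digraph_copy_graph:
  assumes "wf_digraph G"
  shows "wf_digraph (copy_graph G k)"
proof -
  interpret wf_digraph G by fact
  show ?thesis unfolding copy_graph_def by unfold_locales auto
qed

lemma solution_arcs_subset:
  assumes "is_solution G k s t Fs B"
  shows "(\<Union>i<k. set (Fs i)) \<union> set B \<subseteq> arcs G \<times> {0..<k}"
  using assms unfolding is_solution_def pre_digraph.apath_def pre_digraph.awalk_def
  by (auto simp: copy_graph_def)

lemma solution_disjoint_lists:
  assumes "wf_digraph G" "is_solution G k s t Fs B"
  shows "disjoint_lists k Fs"
  using assms wf_digraph.apath_distinct_arcs[OF wf_digraph_copy_graph[OF assms(1)]]
  by unfold_locales (auto simp: is_solution_def)

lemma sol_cost_mono:
  assumes "finite (arcs G)" "\<forall>e\<in>arcs G. 0 \<le> \<omega> e" "is_solution G k s t Fs B"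
    and "set B' \<subseteq> set B \<union> (\<Union>i<k. set (Fs i))"
  shows "sol_cost \<omega> k Fs B' \<le> sol_cost \<omega> k Fs B"
  unfolding sol_cost_def
proof (rule sum_mono2)
  show "finite ((\<Union>i<k. set (Fs i)) \<union> set B)"
    using solution_arcs_subset[OF assms(3)] assms(1) finite_subset by blast
  show "(\<Union>i<k. set (Fs i)) \<union> set B' \<subseteq> (\<Union>i<k. set (Fs i)) \<union> set B" using assms(4) by blast
next
  fix a assume "a \<in> (\<Union>i<k. set (Fs i)) \<union> set B - ((\<Union>i<k. set (Fs i)) \<union> set B')"
  then have "fst a \<in> arcs G" using solution_arcs_subset[OF assms(3)] by force
  then show "0 \<le> \<omega> (fst a)" using assms(2) by blast
qed

lemma exists_optimal_solution:
  assumes "finite (arcs G)" "\<exists>Fs B. is_solution G k s t Fs B"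
  shows "\<exists>Fs B. is_solution G k s t Fs B \<and>
    (\<forall>Fs' B'. is_solution G k s t Fs' B' \<longrightarrow> sol_cost \<omega> k Fs B \<le> sol_cost \<omega> k Fs' B')"
proof -
  let ?C = "{sol_cost \<omega> k Fs B | Fs B. is_solution G k s t Fs B}"
  have "?C \<subseteq> (\<lambda>A. \<Sum>a\<in>A. \<omega> (fst a)) ` Pow (arcs G \<times> {0..<k})"
  proof
    fix c assume "c \<in> ?C"
    then obtain Fs B where c: "c = sol_cost \<omega> k Fs B" and sol: "is_solution G k s t Fs B"
      by blast
    show "c \<in> (\<lambda>A. \<Sum>a\<in>A. \<omega> (fst a)) ` Pow (arcs G \<times> {0..<k})"
    proof (rule rev_image_eqI)
      show "(\<Union>i<k. set (Fs i)) \<union> set B \<in> Pow (arcs G \<times> {0..<k})"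
        using solution_arcs_subset[OF sol] by blast
    qed (simp add: c sol_cost_def)
  qed
  moreover have "finite (Pow (arcs G \<times> {0..<k}))" using assms(1) by simp
  ultimately have fin: "finite ?C" using finite_subset by blast
  have "?C \<noteq> {}" using assms(2) by blast
  then have "Min ?C \<in> ?C" using Min_in[OF fin] by blast
  then obtain Fs B where "is_solution G k s t Fs B" "sol_cost \<omega> k Fs B = Min ?C"
    unfolding mem_Collect_eq by metis
  moreover have "Min ?C \<le> sol_cost \<omega> k Fs' B'" if "is_solution G k s t Fs' B'" for Fs' B'
    using Min_le[OF fin] that by blast
  ultimately show ?thesis by metis
qed

lemma solution_with_fewer_breaks:
  assumes "wf_digraph G" "finite (arcs G)" "\<forall>e\<in>arcs G. 0 \<le> \<omega> e"
    and sol: "is_solution G k s t Fs B" and i: "i < k" and "\<not> path_rev_compatible (Fs i) B"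
  shows "\<exists>B'. is_solution G k s t Fs B' \<and> sol_cost \<omega> k Fs B' \<le> sol_cost \<omega> k Fs B
    \<and> breaks k Fs B' < breaks k Fs B"
proof -
  have "disjoint_lists k Fs" using solution_disjoint_lists[OF assms(1) sol] .
  moreover have "pre_digraph.apath (copy_graph G k) s (Fs j) t" if "j < k" for j
    using sol that unfolding is_solution_def by blast
  moreover have "pre_digraph.apath (copy_graph G k) t B s" using sol unfolding is_solution_def by blast
  ultimately obtain B' where B': "pre_digraph.apath (copy_graph G k) t B' s"
      "set B' \<subseteq> set B \<union> set (Fs i)" "breaks k Fs B' < breaks k Fs B"
    using wf_digraph.exists_fewer_breaks_if_not_rev_compatible[OF wf_digraph_copy_graph[OF assms(1)]]
      i assms(6) by meson
  have "is_solution G k s t Fs B'" using sol B'(1) unfolding is_solution_def by blast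
  moreover have "set B' \<subseteq> set B \<union> (\<Union>i<k. set (Fs i))" using B'(2) i by blast
  then have "sol_cost \<omega> k Fs B' \<le> sol_cost \<omega> k Fs B" by (rule sol_cost_mono[OF assms(2,3) sol])
  ultimately show ?thesis using B'(3) by blast
qed

theorem lemma2:
  fixes G :: "('a,'b) pre_digraph" and \<omega> :: "'b \<Rightarrow> real" and s t :: 'a and k :: nat
  assumes "fin_digraph G"
    and "s \<in> verts G" and "t \<in> verts G"
    and "k \<ge> 1"
    and "\<forall>e \<in> arcs G. 0 \<le> \<omega> e"
    and "\<exists>Fs B. is_solution G k s t Fs B"
  shows "\<exists>Fs B. is_solution G k s t Fs B
           \<and> (\<forall>Fs' B'. is_solution G k s t Fs' B' \<longrightarrow> sol_cost \<omega> k Fs B \<le> sol_cost \<omega> k Fs' B')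
           \<and> rev_compatible k Fs B"
proof -
  have wf: "wf_digraph G" and fin: "finite (arcs G)"
    using assms(1) unfolding fin_digraph_def fin_digraph_axioms_def by auto
  obtain Fs B0 where opt: "is_solution G k s t Fs B0"
    "\<forall>Fs' B'. is_solution G k s t Fs' B' \<longrightarrow> sol_cost \<omega> k Fs B0 \<le> sol_cost \<omega> k Fs' B'"
    using exists_optimal_solution[OF fin assms(6)] by blast
  let ?optimal = "\<lambda>B. is_solution G k s t Fs B \<and> sol_cost \<omega> k Fs B \<le> sol_cost \<omega> k Fs B0"
  obtain B where "?optimal B" and fewest: "\<And>B'. ?optimal B' \<Longrightarrow> breaks k Fs B \<le> breaks k Fs B'"
    using ex_has_least_nat[of ?optimal B0 "breaks k Fs"] opt(1) by auto
  then have sol: "is_solution G k s t Fs B" and cost: "sol_cost \<omega> k Fs B \<le> sol_cost \<omega> k Fs B0"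
    by auto
  have "path_rev_compatible (Fs i) B" if "i < k" for i
    using solution_with_fewer_breaks[OF wf fin assms(5) sol that] fewest cost
    by (meson leD order_trans)
  moreover have "sol_cost \<omega> k Fs B \<le> sol_cost \<omega> k Fs' B'" if "is_solution G k s t Fs' B'" for Fs' B'
    using cost opt(2) that by fastforce
  ultimately show ?thesis using sol unfolding rev_compatible_def by blast
qed

end
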